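(* Let $R$ be a bounded distributive lattice, regarded as a commutative semiring with addition the join, multiplication the meet, $0$ the bottom and $1$ the top element. Then $\mathsf{Kl}(D_R)$ is a causal Markov category.
   Context: The Markov category $\mathsf{Kl}(D_R)$ has sets as objects; a morphism $f\colon A\to X$ assigns to each $a\in A$ a finitely supported function $f(\cdot\mid a)\colon X\to R$ with $\sum_x f(x\mid a)=1$; composition $(g\circ f)(y\mid a)=\sum_x g(y\mid x)f(x\mid a)$; tensor product is the cartesian product with $(f\otimes g)(x,y\mid a,b)=f(x\mid a)g(y\mid b)$; $\mathrm{copy}_X(x_1,x_2\mid x)=\delta_x(x_1)\delta_x(x_2)$; $\mathrm{del}_X$ is the unique morphism to the singleton. A Markov category is causal if for all $f\colon A\to W$, $g\colon W\to X$, $h_1,h_2\colon X\to Y$ with $(\mathrm{id}_X\otimes h_1)\circ\mathrm{copy}_X\circ g\circ f=(\mathrm{id}_X\otimes h_2)\circ\mathrm{copy}_X\circ g\circ f$, also $\big(\mathrm{id}_W\otimes((\mathrm{id}_X\otimes h_1)\circ\mathrm{copy}_X\circ g)\big)\circ\mathrm{copy}_W\circ f=\big(\mathrm{id}_W\otimes((\mathrm{id}_X\otimes h_2)\circ\mathrm{copy}_X\circ g)\big)\circ\mathrm{copy}_W\circ f$. *)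

theory Defs
  imports Main
begin

text \<open>Objects are (nonempty) types; a morphism A -> X is a function f :: 'a => 'x => 'r,
where f a x stands for f(x | a).\<close>

definition lsum :: "('a \<Rightarrow> 'r::{distrib_lattice,bounded_lattice}) \<Rightarrow> 'a set \<Rightarrow> 'r" where
  "lsum f S = Finite_Set.fold (\<lambda>x acc. sup (f x) acc) bot S"

definition supp :: "('x \<Rightarrow> 'r::{distrib_lattice,bounded_lattice}) \<Rightarrow> 'x set" where
  "supp p = {x. p x \<noteq> bot}"

definition kmor :: "('a \<Rightarrow> 'x \<Rightarrow> 'r::{distrib_lattice,bounded_lattice}) \<Rightarrow> bool" where
  "kmor f \<longleftrightarrow> (\<forall>a. finite (supp (f a)) \<and> lsum (f a) (supp (f a)) = top)"

definition kcomp :: "('x \<Rightarrow> 'y \<Rightarrow> 'r::{distrib_lattice,bounded_lattice}) \<Rightarrow> ('a \<Rightarrow> 'x \<Rightarrow> 'r) \<Rightarrow> 'a \<Rightarrow> 'y \<Rightarrow> 'r" where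
  "kcomp g f = (\<lambda>a y. lsum (\<lambda>x. inf (g x y) (f a x)) (supp (f a)))"

definition ktensor :: "('a \<Rightarrow> 'x \<Rightarrow> 'r::{distrib_lattice,bounded_lattice}) \<Rightarrow> ('b \<Rightarrow> 'y \<Rightarrow> 'r)
    \<Rightarrow> ('a \<times> 'b) \<Rightarrow> ('x \<times> 'y) \<Rightarrow> 'r" where
  "ktensor f g = (\<lambda>(a, b) (x, y). inf (f a x) (g b y))"

definition kid :: "'x \<Rightarrow> 'x \<Rightarrow> 'r::{distrib_lattice,bounded_lattice}" where
  "kid = (\<lambda>a x. if x = a then top else bot)"

definition kcopy :: "'x \<Rightarrow> ('x \<times> 'x) \<Rightarrow> 'r::{distrib_lattice,bounded_lattice}" where
  "kcopy = (\<lambda>x (x1, x2). if x1 = x \<and> x2 = x then top else bot)"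

end

theory Submission
  imports Defs
begin

(* For a kernel p, the composite (id \<otimes> h) \<circ> copy \<circ> p has weight inf (h x y) (p a x) at (x, y).
   So the hypothesis says that h1 x y and h2 x y have the same meet with (g \<circ> f)(x | a), while
   the conclusion asks the same for their meets with inf (g w x) (f a w).  The latter is one of
   the joinands of (g \<circ> f)(x | a), hence below it, and equality of meets with an element passes
   to every smaller element. *)

lemma comp_fun_commute_on_lsum:
  "comp_fun_commute_on UNIV (\<lambda>x acc. sup ((f::'a \<Rightarrow> 'r::{distrib_lattice,bounded_lattice}) x) acc)"
  by unfold_locales (auto simp: fun_eq_iff sup_left_commute)

lemma lsum_empty [simp]: "lsum f {} = bot"
  by (simp add: lsum_def)

lemma lsum_insert:
  "finite S \<Longrightarrow> x \<notin> S \<Longrightarrow> lsum f (insert x S) = sup (f x) (lsum f S)"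
  unfolding lsum_def by (simp add: comp_fun_commute_on.fold_insert[OF comp_fun_commute_on_lsum])

lemma lsum_le_iff: "finite S \<Longrightarrow> lsum f S \<le> z \<longleftrightarrow> (\<forall>x\<in>S. f x \<le> z)"
  by (induction S rule: finite_induct) (auto simp: lsum_insert)

lemma lsum_upper: "finite S \<Longrightarrow> x \<in> S \<Longrightarrow> f x \<le> lsum f S"
  using lsum_le_iff by blast

lemma lsum_eq_single:
  assumes "finite S" and "\<And>x. x \<in> S \<Longrightarrow> x \<noteq> u \<Longrightarrow> f x = bot"
  shows "lsum f S = (if u \<in> S then f u else bot)"
proof (rule antisym)
  have "f x \<le> (if u \<in> S then f u else bot)" if "x \<in> S" for x
    using that assms(2)[OF that] by (cases "x = u") auto
  then show "lsum f S \<le> (if u \<in> S then f u else bot)"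
    using assms(1) by (simp add: lsum_le_iff)
  show "(if u \<in> S then f u else bot) \<le> lsum f S"
    using lsum_upper[OF assms(1)] by auto
qed

lemma inf_le_kcomp:
  assumes "finite (supp (f a))"
  shows "inf (g w x) (f a w) \<le> kcomp g f a x"
proof (cases "w \<in> supp (f a)")
  case True
  then show ?thesis
    unfolding kcomp_def using lsum_upper[OF assms True, of "\<lambda>w. inf (g w x) (f a w)"] by simp
qed (simp add: supp_def)

lemma finite_supp_kcomp:
  assumes "finite (supp (f a))" and "\<And>w. finite (supp (g w))"
  shows "finite (supp (kcomp g f a))"
proof -
  have "supp (kcomp g f a) \<subseteq> (\<Union>w\<in>supp (f a). supp (g w))"
  proof
    fix x assume "x \<in> supp (kcomp g f a)"
    then have "\<not> kcomp g f a x \<le> bot"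
      by (simp add: supp_def bot_unique)
    then show "x \<in> (\<Union>w\<in>supp (f a). supp (g w))"
      unfolding kcomp_def using assms(1) by (auto simp: lsum_le_iff supp_def)
  qed
  then show ?thesis
    using assms by (auto intro: finite_subset)
qed

lemma kcomp_kcopy_apply:
  assumes "finite (supp (p a))"
  shows "kcomp kcopy p a (x1, x2) = (if x1 = x2 then p a x1 else bot)"
  unfolding kcomp_def
  by (subst lsum_eq_single[OF assms, where u = x1]) (auto simp: kcopy_def supp_def)

lemma finite_supp_kcomp_kcopy:
  assumes "finite (supp (p a))"
  shows "finite (supp (kcomp kcopy p a))"
proof -
  have "supp (kcomp kcopy p a) \<subseteq> (\<lambda>x. (x, x)) ` supp (p a)"
    by (auto simp: supp_def kcomp_kcopy_apply[of p a, OF assms] split: if_splits)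
  then show ?thesis
    using assms finite_subset by blast
qed

lemma kcomp_ktensor_kid_kcopy_apply:
  assumes "finite (supp (p a))"
  shows "kcomp (ktensor kid h) (kcomp kcopy p) a (x, y) = inf (h x y) (p a x)"
  unfolding kcomp_def[of "ktensor kid h"]
  by (subst lsum_eq_single[OF finite_supp_kcomp_kcopy[of p a, OF assms], where u = "(x, x)"])
    (auto simp: kcomp_kcopy_apply[of p a, OF assms] kid_def ktensor_def supp_def split: if_splits)

lemma inf_eq_below:
  fixes u v :: "'a::lattice"
  assumes "inf u c = inf v c" and "d \<le> c"
  shows "inf u d = inf v d"
proof -
  have "inf u d = inf (inf u c) d"
    using assms(2) by (simp add: inf_assoc inf_absorb2)
  also have "\<dots> = inf v d"
    using assms by (simp add: inf_assoc inf_absorb2)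
  finally show ?thesis .
qed

theorem proposition2p23:
  fixes f :: "'a \<Rightarrow> 'w \<Rightarrow> 'r::{distrib_lattice,bounded_lattice}"
    and g :: "'w \<Rightarrow> 'x \<Rightarrow> 'r"
    and h1 h2 :: "'x \<Rightarrow> 'y \<Rightarrow> 'r"
  assumes "kmor f" and "kmor g" and "kmor h1" and "kmor h2"
    and "kcomp (ktensor kid h1) (kcomp kcopy (kcomp g f))
         = kcomp (ktensor kid h2) (kcomp kcopy (kcomp g f))"
  shows "kcomp (ktensor kid (kcomp (ktensor kid h1) (kcomp kcopy g))) (kcomp kcopy f)
       = kcomp (ktensor kid (kcomp (ktensor kid h2) (kcomp kcopy g))) (kcomp kcopy f)"
proof (intro ext)
  fix a and z :: "'w \<times> 'x \<times> 'y"
  obtain w x y where z: "z = (w, x, y)"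
    by (cases z) auto
  have f_fin: "\<And>a. finite (supp (f a))" and g_fin: "\<And>w. finite (supp (g w))"
    using assms(1,2) by (auto simp: kmor_def)
  have "inf (h1 x y) (kcomp g f a x) = inf (h2 x y) (kcomp g f a x)"
    using fun_cong[OF fun_cong[OF assms(5), of a], of "(x, y)"]
    by (simp add: kcomp_ktensor_kid_kcopy_apply finite_supp_kcomp f_fin g_fin)
  then have "inf (h1 x y) (inf (g w x) (f a w)) = inf (h2 x y) (inf (g w x) (f a w))"
    by (rule inf_eq_below) (rule inf_le_kcomp[OF f_fin])
  then show "kcomp (ktensor kid (kcomp (ktensor kid h1) (kcomp kcopy g))) (kcomp kcopy f) a z
           = kcomp (ktensor kid (kcomp (ktensor kid h2) (kcomp kcopy g))) (kcomp kcopy f) a z"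
    by (simp add: z kcomp_ktensor_kid_kcopy_apply f_fin g_fin inf_assoc)
qed

end
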